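(* Let $0<p\le1$ and let $\rho$ be a function quasi-norm over a $\sigma$-finite measure space $(\Omega,\Sigma,\mu)$ which is $p$-convex and has the weak Fatou property. Then $\rho$ has the Riesz–Fischer $p$-property.
   Context: $L_0^+(\mu)$: measurable functions $\Omega\to[0,\infty]$ modulo a.e. equality. A function quasi-norm is $\rho\colon L_0^+(\mu)\to[0,\infty]$ with (F1) $\rho(tf)=t\rho(f)$, $t\ge0$; (F2) $f\le g$ a.e. $\Rightarrow\rho(f)\le\rho(g)$; (F3) $\rho(\chi_E)<\infty$ if $\mu(E)<\infty$; (F4) for all $E$ with $\mu(E)<\infty$ and $\varepsilon>0$ there is $\delta>0$ with $\mu(A)\le\varepsilon$ whenever $A\subseteq E$ measurable and $\rho(\chi_A)\le\delta$; (F5) $\rho(f+g)\le\kappa(\rho(f)+\rho(g))$. $\rho$ is $p$-convex if there is $C$ with $\rho^p(\sum_{j=1}^nf_j)\le C\sum_{j=1}^n\rho^p(f_j)$ for all $n$ and $f_j\in L_0^+(\mu)$. Weak Fatou property: $\rho(\lim f_n)<\infty$ whenever $(f_n)$ is non-decreasing with $\lim\rho(f_n)<\infty$. Riesz–Fischer $p$-property: for every sequence $(f_n)$ in $L_0^+(\mu)$ with $\sum_n\rho^p(f_n)<\infty$ one has $\rho(\sum_nf_n)<\infty$. *)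

theory Defs
  imports "HOL-Analysis.Analysis"
begin

text \<open>Functions in L0+ are represented by measurable maps into ennreal; rho acts on
  such maps and is required to be invariant under a.e. equality.\<close>

definition epowr :: "ennreal \<Rightarrow> real \<Rightarrow> ennreal" where
  "epowr x p = (if x = \<infinity> then \<infinity> else ennreal (enn2real x powr p))"

definition function_quasi_norm :: "'a measure \<Rightarrow> (('a \<Rightarrow> ennreal) \<Rightarrow> ennreal) \<Rightarrow> bool" where
  "function_quasi_norm M \<rho> \<longleftrightarrow>
     (\<forall>f\<in>borel_measurable M. \<forall>g\<in>borel_measurable M.
        (AE x in M. f x = g x) \<longrightarrow> \<rho> f = \<rho> g) \<and>
     (\<forall>f\<in>borel_measurable M. \<forall>t::real. t \<ge> 0 \<longrightarrow>
        \<rho> (\<lambda>x. ennreal t * f x) = ennreal t * \<rho> f) \<and>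
     (\<forall>f\<in>borel_measurable M. \<forall>g\<in>borel_measurable M.
        (AE x in M. f x \<le> g x) \<longrightarrow> \<rho> f \<le> \<rho> g) \<and>
     (\<forall>E\<in>sets M. emeasure M E < \<infinity> \<longrightarrow> \<rho> (indicator E) < \<infinity>) \<and>
     (\<forall>E\<in>sets M. emeasure M E < \<infinity> \<longrightarrow>
        (\<forall>\<epsilon>::real. \<epsilon> > 0 \<longrightarrow> (\<exists>\<delta>::real. \<delta> > 0 \<and>
          (\<forall>A\<in>sets M. A \<subseteq> E \<longrightarrow> \<rho> (indicator A) \<le> ennreal \<delta>
              \<longrightarrow> emeasure M A \<le> ennreal \<epsilon>)))) \<and>
     (\<exists>\<kappa>::real. \<kappa> \<ge> 1 \<and> (\<forall>f\<in>borel_measurable M. \<forall>g\<in>borel_measurable M.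
        \<rho> (\<lambda>x. f x + g x) \<le> ennreal \<kappa> * (\<rho> f + \<rho> g)))"

definition p_convex :: "'a measure \<Rightarrow> (('a \<Rightarrow> ennreal) \<Rightarrow> ennreal) \<Rightarrow> real \<Rightarrow> bool" where
  "p_convex M \<rho> p \<longleftrightarrow> (\<exists>C::real. \<forall>n. \<forall>fs::nat \<Rightarrow> 'a \<Rightarrow> ennreal.
     (\<forall>j<n. fs j \<in> borel_measurable M) \<longrightarrow>
     epowr (\<rho> (\<lambda>x. \<Sum>j<n. fs j x)) p \<le> ennreal C * (\<Sum>j<n. epowr (\<rho> (fs j)) p))"

definition weak_fatou :: "'a measure \<Rightarrow> (('a \<Rightarrow> ennreal) \<Rightarrow> ennreal) \<Rightarrow> bool" where
  "weak_fatou M \<rho> \<longleftrightarrow> (\<forall>fs::nat \<Rightarrow> 'a \<Rightarrow> ennreal.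
     (\<forall>n. fs n \<in> borel_measurable M) \<longrightarrow>
     (\<forall>n. AE x in M. fs n x \<le> fs (Suc n) x) \<longrightarrow>
     (SUP n. \<rho> (fs n)) < \<infinity> \<longrightarrow> \<rho> (\<lambda>x. SUP n. fs n x) < \<infinity>)"

definition riesz_fischer_p :: "'a measure \<Rightarrow> (('a \<Rightarrow> ennreal) \<Rightarrow> ennreal) \<Rightarrow> real \<Rightarrow> bool" where
  "riesz_fischer_p M \<rho> p \<longleftrightarrow> (\<forall>fs::nat \<Rightarrow> 'a \<Rightarrow> ennreal.
     (\<forall>n. fs n \<in> borel_measurable M) \<longrightarrow>
     (\<Sum>n. epowr (\<rho> (fs n)) p) < \<infinity> \<longrightarrow> \<rho> (\<lambda>x. \<Sum>n. fs n x) < \<infinity>)"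

end

theory Submission
  imports Defs
begin

text \<open>By p-convexity, \<open>\<rho>\<^sup>p\<close> of every partial sum \<open>f\<^sub>0 + \<dots> + f\<^sub>N\<^sub>-\<^sub>1\<close> is at most
  \<open>C \<Sum>\<^sub>n \<rho>\<^sup>p(f\<^sub>n)\<close>, so the partial sums are uniformly \<open>\<rho>\<close>-bounded. They increase pointwise
  to \<open>\<Sum>\<^sub>n f\<^sub>n\<close>, and the weak Fatou property makes \<open>\<rho>(\<Sum>\<^sub>n f\<^sub>n)\<close> finite.\<close>

lemma epowr_le_imp_le_root:
  assumes "epowr x p \<le> K" "K < \<infinity>" "0 < p"
  shows "x \<le> ennreal (enn2real K powr (1/p))"
proof -
  have x_finite: "x \<noteq> \<infinity>"
    using assms unfolding epowr_def by (auto split: if_splits)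
  then have "enn2real x powr p \<le> enn2real K"
    using assms(1,2) enn2real_mono[of "ennreal (enn2real x powr p)" K]
    unfolding epowr_def by simp
  then have "(enn2real x powr p) powr (1/p) \<le> enn2real K powr (1/p)"
    using assms(3) by (intro powr_mono2) auto
  then have "enn2real x \<le> enn2real K powr (1/p)"
    using assms(3) by (simp add: powr_powr)
  then show ?thesis
    using x_finite ennreal_leI[of "enn2real x"] by (simp add: top.not_eq_extremum)
qed

lemma p_convex_partial_sums_bounded:
  fixes fs :: "nat \<Rightarrow> 'a \<Rightarrow> ennreal"
  assumes "p_convex M \<rho> p" "0 < p"
    and measurable: "\<And>n. fs n \<in> borel_measurable M"
    and summable: "(\<Sum>n. epowr (\<rho> (fs n)) p) < \<infinity>"
  shows "(SUP N. \<rho> (\<lambda>x. \<Sum>j<N. fs j x)) < \<infinity>"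
proof -
  obtain C :: real where C: "\<And>N. epowr (\<rho> (\<lambda>x. \<Sum>j<N. fs j x)) p
      \<le> ennreal C * (\<Sum>j<N. epowr (\<rho> (fs j)) p)"
    using assms(1) measurable unfolding p_convex_def by blast
  define K where "K = ennreal C * (\<Sum>n. epowr (\<rho> (fs n)) p)"
  have K_finite: "K < \<infinity>"
    unfolding K_def using summable by (simp add: ennreal_mult_less_top)
  have "\<rho> (\<lambda>x. \<Sum>j<N. fs j x) \<le> ennreal (enn2real K powr (1/p))" for N
  proof (rule epowr_le_imp_le_root[OF _ K_finite \<open>0 < p\<close>])
    have "epowr (\<rho> (\<lambda>x. \<Sum>j<N. fs j x)) p \<le> ennreal C * (\<Sum>j<N. epowr (\<rho> (fs j)) p)"
      by (rule C)
    also have "\<dots> \<le> K"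
      unfolding K_def by (intro mult_left_mono sum_le_suminf) auto
    finally show "epowr (\<rho> (\<lambda>x. \<Sum>j<N. fs j x)) p \<le> K" .
  qed
  then have "(SUP N. \<rho> (\<lambda>x. \<Sum>j<N. fs j x)) \<le> ennreal (enn2real K powr (1/p))"
    by (simp add: SUP_le_iff)
  then show ?thesis
    by (simp add: le_less_trans)
qed

lemma weak_fatou_suminf_finite:
  fixes fs :: "nat \<Rightarrow> 'a \<Rightarrow> ennreal"
  assumes "weak_fatou M \<rho>"
    and measurable: "\<And>n. fs n \<in> borel_measurable M"
    and bounded: "(SUP N. \<rho> (\<lambda>x. \<Sum>j<N. fs j x)) < \<infinity>"
  shows "\<rho> (\<lambda>x. \<Sum>n. fs n x) < \<infinity>"
proof -
  have "(\<lambda>x. \<Sum>j<N. fs j x) \<in> borel_measurable M" for N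
    using measurable by simp
  moreover have "AE x in M. (\<Sum>j<N. fs j x) \<le> (\<Sum>j<Suc N. fs j x)" for N
    by simp
  ultimately have "\<rho> (\<lambda>x. SUP N. \<Sum>j<N. fs j x) < \<infinity>"
    using assms(1) bounded unfolding weak_fatou_def by simp
  then show ?thesis
    by (simp add: suminf_eq_SUP)
qed

theorem lemma3p18:
  fixes M :: "'a measure" and \<rho> :: "('a \<Rightarrow> ennreal) \<Rightarrow> ennreal" and p :: real
  assumes "sigma_finite_measure M"
    and "0 < p" and "p \<le> 1"
    and "function_quasi_norm M \<rho>"
    and "p_convex M \<rho> p"
    and "weak_fatou M \<rho>"
  shows "riesz_fischer_p M \<rho> p"
  unfolding riesz_fischer_p_def
proof (intro allI impI)
  fix fs :: "nat \<Rightarrow> 'a \<Rightarrow> ennreal"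
  assume measurable: "\<forall>n. fs n \<in> borel_measurable M"
    and summable: "(\<Sum>n. epowr (\<rho> (fs n)) p) < \<infinity>"
  have "(SUP N. \<rho> (\<lambda>x. \<Sum>j<N. fs j x)) < \<infinity>"
    using p_convex_partial_sums_bounded[OF assms(5,2)] measurable summable by blast
  then show "\<rho> (\<lambda>x. \<Sum>n. fs n x) < \<infinity>"
    using weak_fatou_suminf_finite[OF assms(6)] measurable by blast
qed

end
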